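(* Any discrete quasigroup, and in particular any discrete group, is approximable by finite quasigroups.
   Context: A quasigroup is a set $A$ with a binary operation $\circ$ such that for all $a,b\in A$ each of the equations $a\circ x=b$ and $x\circ a=b$ has a unique solution. $A$ carries the discrete topology. Approximability of a topological algebra $(A,\circ)$ by a class $\mathcal K$ of finite algebras: for a compact $C\subseteq A$, a finite cover $\mathcal U$ of $C$ by open sets, and a finite algebra $(H,\odot)$, a map $j:H\to A$ gives a $(C,\mathcal U)$-approximation if (i) every $U\in\mathcal U$ with $U\cap C\ne\emptyset$ contains a point of $j(H)$, and (ii) for all $x,y\in H$ with $j(x),j(y),j(x)\circ j(y)\in C$ there is $U\in\mathcal U$ containing both $j(x\odot y)$ and $j(x)\circ j(y)$; $A$ is approximable by $\mathcal K$ if for every compact $C$ and finite open cover $\mathcal U$ of $C$ there is a $(C,\mathcal U)$-approximation $(H,j)$ with $H\in\mathcal K$ and $j$ injective. *)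

theory Defs
  imports "HOL-Analysis.Analysis"
begin

definition quasigroup_on :: "'a set \<Rightarrow> ('a \<Rightarrow> 'a \<Rightarrow> 'a) \<Rightarrow> bool" where
  "quasigroup_on A f \<longleftrightarrow>
     (\<forall>a\<in>A. \<forall>b\<in>A. f a b \<in> A) \<and>
     (\<forall>a\<in>A. \<forall>b\<in>A. \<exists>!x. x \<in> A \<and> f a x = b) \<and>
     (\<forall>a\<in>A. \<forall>b\<in>A. \<exists>!x. x \<in> A \<and> f x a = b)"

definition is_approximation ::
  "'a topology \<Rightarrow> ('a \<Rightarrow> 'a \<Rightarrow> 'a) \<Rightarrow> 'a set \<Rightarrow> 'a set set \<Rightarrow>
   'h set \<Rightarrow> ('h \<Rightarrow> 'h \<Rightarrow> 'h) \<Rightarrow> ('h \<Rightarrow> 'a) \<Rightarrow> bool" where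
  "is_approximation T f C \<U> H g j \<longleftrightarrow>
     j ` H \<subseteq> topspace T \<and>
     (\<forall>U\<in>\<U>. U \<inter> C \<noteq> {} \<longrightarrow> (\<exists>x\<in>H. j x \<in> U)) \<and>
     (\<forall>x\<in>H. \<forall>y\<in>H. j x \<in> C \<and> j y \<in> C \<and> f (j x) (j y) \<in> C \<longrightarrow>
        (\<exists>U\<in>\<U>. j (g x y) \<in> U \<and> f (j x) (j y) \<in> U))"

text \<open>Approximability by a class K of finite algebras. Finite algebras are represented
  with carriers that are (finite) sets of natural numbers; every finite algebra is
  isomorphic to such a one.\<close>
definition approximable_by ::
  "'a topology \<Rightarrow> ('a \<Rightarrow> 'a \<Rightarrow> 'a) \<Rightarrow> (nat set \<Rightarrow> (nat \<Rightarrow> nat \<Rightarrow> nat) \<Rightarrow> bool) \<Rightarrow> bool" where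
  "approximable_by T f K \<longleftrightarrow>
     (\<forall>C \<U>. compactin T C \<and> finite \<U> \<and> (\<forall>U\<in>\<U>. openin T U) \<and> C \<subseteq> \<Union>\<U> \<longrightarrow>
        (\<exists>H g j. K H g \<and> finite H \<and> inj_on j H \<and> is_approximation T f C \<U> H g j))"

definition finite_quasigroup :: "nat set \<Rightarrow> (nat \<Rightarrow> nat \<Rightarrow> nat) \<Rightarrow> bool" where
  "finite_quasigroup H g \<longleftrightarrow> finite H \<and> quasigroup_on H g"

end

theory Submission
  imports Defs
begin

(* Compact subsets of a discrete space are finite, and a (C,U)-approximation comes from any
  finite quasigroup (G, \<cdot>) with an injection J into A such that C is contained in J(G) and
  J (x \<cdot> y) = J x \<circ> J y whenever J x, J y and J x \<circ> J y lie in C. If A is finite, A itself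
  serves. Otherwise the partial multiplication table of C (writing ab for a \<circ> b) is
  embedded, in the manner of Evans, into a finite quasigroup: take the subsets of three
  disjoint copies Row C, Col C, Entry C of C (disjoint so that a, b and ab stay apart even
  when they coincide) under symmetric difference. For every defined product ab the rows
  {Row a}, {Col b, Entry ab} and the columns {Col b}, {Row a, Entry ab} span an intercalate
  with entries {Row a, Col b} and {Entry ab}. By cancellation these intercalates are pairwise
  disjoint, so switching all of them leaves a Latin square in which {Row a} {Col b} = {Entry ab}.
  An isotopy turns it into a quasigroup in which {Entry a} {Entry b} = {Entry ab}, and as A is
  infinite the remaining elements can be sent injectively outside C. *)

lemma bij_betw_iff_ex1:
  "bij_betw h G G \<longleftrightarrow> (\<forall>x\<in>G. h x \<in> G) \<and> (\<forall>b\<in>G. \<exists>!x. x \<in> G \<and> h x = b)"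
proof (intro iffI conjI ballI)
  fix x assume "bij_betw h G G" "x \<in> G"
  then show "h x \<in> G"
    by (rule bij_betw_apply)
next
  fix b assume h: "bij_betw h G G" and "b \<in> G"
  then obtain x where "x \<in> G" "h x = b"
    by (metis bij_betw_imp_surj_on imageE)
  moreover have "y = x" if "y \<in> G" "h y = b" for y
    using h that calculation by (simp add: bij_betw_def inj_on_def)
  ultimately show "\<exists>!x. x \<in> G \<and> h x = b"
    by blast
next
  assume H: "(\<forall>x\<in>G. h x \<in> G) \<and> (\<forall>b\<in>G. \<exists>!x. x \<in> G \<and> h x = b)"
  have closed: "h x \<in> G" if "x \<in> G" for x
    by (rule bspec[OF conjunct1[OF H] that])
  have unique: "\<exists>!x. x \<in> G \<and> h x = b" if "b \<in> G" for b
    by (rule bspec[OF conjunct2[OF H] that])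
  have "inj_on h G"
  proof (rule inj_onI)
    fix x y assume "x \<in> G" "y \<in> G" "h x = h y"
    then show "x = y"
      using unique[OF closed[OF \<open>x \<in> G\<close>]] by metis
  qed
  moreover have "G \<subseteq> h ` G"
  proof
    fix b assume "b \<in> G"
    then obtain x where "x \<in> G" "h x = b"
      using ex1_implies_ex[OF unique] by blast
    then show "b \<in> h ` G"
      by blast
  qed
  ultimately show "bij_betw h G G"
    using closed by (auto simp: bij_betw_def)
qed

lemma quasigroup_on_iff_bij_betw:
  "quasigroup_on G q \<longleftrightarrow>
     (\<forall>a\<in>G. bij_betw (q a) G G) \<and> (\<forall>a\<in>G. bij_betw (\<lambda>x. q x a) G G)"
proof -
  have "(\<forall>a\<in>G. \<forall>x\<in>G. q x a \<in> G) \<longleftrightarrow> (\<forall>a\<in>G. \<forall>b\<in>G. q a b \<in> G)"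
    by blast
  then show ?thesis
    unfolding quasigroup_on_def bij_betw_iff_ex1 ball_conj_distrib
    by (simp only: conj_left_absorb conj_ac)
qed

lemma quasigroup_on_closed: "quasigroup_on G q \<Longrightarrow> a \<in> G \<Longrightarrow> b \<in> G \<Longrightarrow> q a b \<in> G"
  by (simp add: quasigroup_on_def)

lemma quasigroup_on_isotope:
  assumes "quasigroup_on G q"
    and \<alpha>: "bij_betw \<alpha> H G" and \<beta>: "bij_betw \<beta> H G" and \<gamma>: "bij_betw \<gamma> G H"
  shows "quasigroup_on H (\<lambda>x y. \<gamma> (q (\<alpha> x) (\<beta> y)))"
proof -
  have row: "bij_betw (q a) G G" and col: "bij_betw (\<lambda>x. q x a) G G" if "a \<in> G" for a
    using assms(1) that by (auto simp: quasigroup_on_iff_bij_betw)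
  have "bij_betw (\<gamma> \<circ> q (\<alpha> x) \<circ> \<beta>) H H" if "x \<in> H" for x
    using bij_betw_trans[OF \<beta> bij_betw_trans[OF row[OF bij_betw_apply[OF \<alpha> that]] \<gamma>]] .
  moreover have "bij_betw (\<gamma> \<circ> (\<lambda>y. q y (\<beta> x)) \<circ> \<alpha>) H H" if "x \<in> H" for x
    using bij_betw_trans[OF \<alpha> bij_betw_trans[OF col[OF bij_betw_apply[OF \<beta> that]] \<gamma>]] .
  ultimately show ?thesis
    unfolding quasigroup_on_iff_bij_betw comp_def by blast
qed

lemma finite_quasigroup_nat_copy:
  assumes "finite G" and "quasigroup_on G q"
  obtains N g \<phi> where "finite_quasigroup N g" and "bij_betw \<phi> N G"
    and "\<And>x y. x \<in> N \<Longrightarrow> y \<in> N \<Longrightarrow> \<phi> (g x y) = q (\<phi> x) (\<phi> y)"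
proof -
  define N where "N = {0..<card G}"
  obtain \<phi> where \<phi>: "bij_betw \<phi> N G"
    unfolding N_def using ex_bij_betw_nat_finite[OF \<open>finite G\<close>] by blast
  define g where "g x y = inv_into N \<phi> (q (\<phi> x) (\<phi> y))" for x y
  have "quasigroup_on N g"
    unfolding g_def by (rule quasigroup_on_isotope[OF assms(2) \<phi> \<phi> bij_betw_inv_into[OF \<phi>]])
  then have "finite_quasigroup N g"
    by (simp add: finite_quasigroup_def N_def)
  moreover have "\<phi> (g x y) = q (\<phi> x) (\<phi> y)" if "x \<in> N" "y \<in> N" for x y
    using quasigroup_on_closed[OF assms(2)] \<phi> that unfolding g_def
    by (metis bij_betw_apply bij_betw_inv_into_right)
  ultimately show thesis
    using \<phi> that by blast
qed

lemma is_approximation_discrete_topologyI: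
  assumes "C \<subseteq> j ` H" and "C \<subseteq> \<Union>\<U>"
    and "\<And>x y. \<lbrakk>x \<in> H; y \<in> H; j x \<in> C; j y \<in> C; f (j x) (j y) \<in> C\<rbrakk>
               \<Longrightarrow> j (g x y) = f (j x) (j y)"
  shows "is_approximation (discrete_topology UNIV) f C \<U> H g j"
  unfolding is_approximation_def
proof (intro conjI ballI impI)
  fix U assume "U \<in> \<U>" "U \<inter> C \<noteq> {}"
  then show "\<exists>x\<in>H. j x \<in> U"
    using assms(1) by blast
next
  fix x y assume "x \<in> H" "y \<in> H" "j x \<in> C \<and> j y \<in> C \<and> f (j x) (j y) \<in> C"
  then show "\<exists>U\<in>\<U>. j (g x y) \<in> U \<and> f (j x) (j y) \<in> U"
    using assms(2,3) by auto
qed simp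

lemma approximation_from_quasigroup_embedding:
  assumes "finite G" and "quasigroup_on G q" and "inj_on J G"
    and "C \<subseteq> J ` G" and "C \<subseteq> \<Union>\<U>"
    and hom: "\<And>x y. \<lbrakk>x \<in> G; y \<in> G; J x \<in> C; J y \<in> C; f (J x) (J y) \<in> C\<rbrakk>
                \<Longrightarrow> J (q x y) = f (J x) (J y)"
  shows "\<exists>H g j. finite_quasigroup H g \<and> finite H \<and> inj_on j H \<and>
           is_approximation (discrete_topology UNIV) f C \<U> H g j"
proof -
  obtain N g \<phi> where N: "finite_quasigroup N g" and \<phi>: "bij_betw \<phi> N G"
    and \<phi>_hom: "\<And>x y. x \<in> N \<Longrightarrow> y \<in> N \<Longrightarrow> \<phi> (g x y) = q (\<phi> x) (\<phi> y)"
    using finite_quasigroup_nat_copy[OF assms(1,2)] by blast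
  have "inj_on (J \<circ> \<phi>) N"
    using \<phi> \<open>inj_on J G\<close> by (simp add: bij_betw_def comp_inj_on)
  moreover have "is_approximation (discrete_topology UNIV) f C \<U> N g (J \<circ> \<phi>)"
  proof (rule is_approximation_discrete_topologyI)
    show "C \<subseteq> (J \<circ> \<phi>) ` N"
      using \<phi> \<open>C \<subseteq> J ` G\<close> by (metis bij_betw_imp_surj_on image_comp)
    fix x y assume "x \<in> N" "y \<in> N" "(J \<circ> \<phi>) x \<in> C" "(J \<circ> \<phi>) y \<in> C"
      "f ((J \<circ> \<phi>) x) ((J \<circ> \<phi>) y) \<in> C"
    then show "(J \<circ> \<phi>) (g x y) = f ((J \<circ> \<phi>) x) ((J \<circ> \<phi>) y)"
      using \<phi>_hom hom bij_betw_apply[OF \<phi>] by simp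
  qed fact
  ultimately show ?thesis
    using N by (auto simp: finite_quasigroup_def)
qed

lemma inj_on_extend_to_finite_superset:
  fixes k :: "'a \<Rightarrow> 'b"
  assumes "finite X" and "Y \<subseteq> X" and "inj_on k Y" and "infinite (UNIV :: 'b set)"
  obtains J where "inj_on J X" and "\<And>y. y \<in> Y \<Longrightarrow> J y = k y"
proof -
  have "infinite (UNIV - k ` Y)"
    using assms by (meson Diff_infinite_finite finite_imageI finite_subset)
  then obtain B where B: "finite B" "card B = card (X - Y)" "B \<subseteq> UNIV - k ` Y"
    by (meson infinite_arbitrarily_large)
  moreover have "finite (X - Y)"
    using \<open>finite X\<close> by simp
  ultimately obtain h where h: "bij_betw h (X - Y) B"
    using finite_same_card_bij[of "X - Y" B] by auto
  define J where "J x = (if x \<in> Y then k x else h x)" for x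
  have "inj_on J Y"
    using \<open>inj_on k Y\<close> by (rule inj_on_cong[THEN iffD1, rotated]) (simp add: J_def)
  moreover have "inj_on J (X - Y)"
    using bij_betw_imp_inj_on[OF h] by (rule inj_on_cong[THEN iffD1, rotated]) (simp add: J_def)
  moreover have "J ` Y = k ` Y" and "J ` (X - Y) = B"
    using bij_betw_imp_surj_on[OF h] by (auto simp: J_def)
  ultimately have "inj_on J (Y \<union> (X - Y))"
    unfolding inj_on_Un using B(3) by auto
  also have "Y \<union> (X - Y) = X"
    using \<open>Y \<subseteq> X\<close> by blast
  finally show thesis
    using that by (simp add: J_def)
qed

lemma bij_betw_involution:
  assumes "\<And>x. x \<in> A \<Longrightarrow> h x \<in> A" and "\<And>x. x \<in> A \<Longrightarrow> h (h x) = x"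
  shows "bij_betw h A A"
  by (rule bij_betw_byWitness[where f' = h]) (use assms in auto)

lemma bij_betw_sym_diff_Pow: "A \<subseteq> W \<Longrightarrow> bij_betw (sym_diff A) (Pow W) (Pow W)"
  by (rule bij_betw_involution) auto

datatype 'a latin_tag = Row 'a | Col 'a | Entry 'a

primrec swap_row_entry :: "'a latin_tag \<Rightarrow> 'a latin_tag" where
  "swap_row_entry (Row a) = Entry a"
| "swap_row_entry (Col a) = Col a"
| "swap_row_entry (Entry a) = Row a"

primrec swap_col_entry :: "'a latin_tag \<Rightarrow> 'a latin_tag" where
  "swap_col_entry (Row a) = Row a"
| "swap_col_entry (Col a) = Entry a"
| "swap_col_entry (Entry a) = Col a"

lemma swap_row_entry_swap_row_entry [simp]: "swap_row_entry (swap_row_entry z) = z"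
  by (cases z) simp_all

lemma swap_col_entry_swap_col_entry [simp]: "swap_col_entry (swap_col_entry z) = z"
  by (cases z) simp_all

locale partial_latin_square =
  fixes f :: "'a \<Rightarrow> 'a \<Rightarrow> 'a" and C :: "'a set"
  assumes left_cancel: "\<lbrakk>a \<in> C; b \<in> C; b' \<in> C; f a b = f a b'\<rbrakk> \<Longrightarrow> b = b'"
    and right_cancel: "\<lbrakk>a \<in> C; a' \<in> C; b \<in> C; f a b = f a' b\<rbrakk> \<Longrightarrow> a = a'"
begin

definition tags :: "'a latin_tag set" where
  "tags = Row ` C \<union> Col ` C \<union> Entry ` C"

definition defined :: "'a \<Rightarrow> 'a \<Rightarrow> bool" where
  "defined a b \<longleftrightarrow> a \<in> C \<and> b \<in> C \<and> f a b \<in> C"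

definition triple :: "'a \<Rightarrow> 'a \<Rightarrow> 'a latin_tag set" where
  "triple a b = {Row a, Col b, Entry (f a b)}"

definition in_intercalate :: "'a \<Rightarrow> 'a \<Rightarrow> 'a latin_tag set \<Rightarrow> 'a latin_tag set \<Rightarrow> bool" where
  "in_intercalate a b r c \<longleftrightarrow>
     (r = {Row a} \<or> r = {Col b, Entry (f a b)}) \<and> (c = {Col b} \<or> c = {Row a, Entry (f a b)})"

definition twist :: "'a latin_tag set \<Rightarrow> 'a latin_tag set \<Rightarrow> 'a latin_tag set" where
  "twist r c = \<Union>{triple a b | a b. defined a b \<and> in_intercalate a b r c}"

definition twisted_mult :: "'a latin_tag set \<Rightarrow> 'a latin_tag set \<Rightarrow> 'a latin_tag set" where
  "twisted_mult r c = sym_diff (sym_diff r c) (twist r c)"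

lemma in_intercalate_unique:
  assumes "in_intercalate a b r c" and "in_intercalate a' b' r c"
    and "a \<in> C" "b \<in> C" "a' \<in> C" "b' \<in> C"
  shows "a = a' \<and> b = b'"
proof -
  have r: "r = {Row a} \<or> r = {Col b, Entry (f a b)}" "r = {Row a'} \<or> r = {Col b', Entry (f a' b')}"
    and c: "c = {Col b} \<or> c = {Row a, Entry (f a b)}" "c = {Col b'} \<or> c = {Row a', Entry (f a' b')}"
    using assms(1,2) unfolding in_intercalate_def by blast+
  show ?thesis
  proof (cases "r = {Row a}")
    case True
    then have "a = a'"
      using r(2) by (auto simp: doubleton_eq_iff)
    moreover have "b = b'"
    proof (cases "c = {Col b}")
      case True
      then show ?thesis
        using c(2) by (auto simp: doubleton_eq_iff)
    next
      case False
      then have "f a b = f a b'"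
        using c \<open>a = a'\<close> by (auto simp: doubleton_eq_iff)
      then show ?thesis
        using left_cancel assms(3-6) by blast
    qed
    ultimately show ?thesis ..
  next
    case False
    then have "b = b'" and "f a b = f a' b'"
      using r by (auto simp: doubleton_eq_iff)
    then show ?thesis
      using right_cancel assms(3-6) by blast
  qed
qed

lemma twist_eq:
  assumes "defined a b" and "in_intercalate a b r c"
  shows "twist r c = triple a b"
proof -
  have "{triple a' b' | a' b'. defined a' b' \<and> in_intercalate a' b' r c} = {triple a b}"
    using assms in_intercalate_unique unfolding defined_def by blast
  then show ?thesis
    unfolding twist_def by simp
qed

lemma twist_eq_empty:
  "\<not> (\<exists>a b. defined a b \<and> in_intercalate a b r c) \<Longrightarrow> twist r c = {}"
  unfolding twist_def by blast

lemma twist_subset_tags: "twist r c \<subseteq> tags"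
  unfolding twist_def triple_def defined_def tags_def by blast

text \<open>Switching an intercalate moves each of its cells to another of its cells, so the twist
  does not change when one coordinate is moved by it.\<close>

lemma twist_switch_col: "twist r (sym_diff c (twist r c)) = twist r c"
proof (cases "\<exists>a b. defined a b \<and> in_intercalate a b r c")
  case True
  then obtain a b where ab: "defined a b" "in_intercalate a b r c"
    by blast
  then have "in_intercalate a b r (sym_diff c (triple a b))"
    unfolding in_intercalate_def triple_def by auto
  then show ?thesis
    using ab by (simp add: twist_eq)
qed (simp add: twist_eq_empty)

lemma twist_switch_row: "twist (sym_diff r (twist r c)) c = twist r c"
proof (cases "\<exists>a b. defined a b \<and> in_intercalate a b r c")
  case True
  then obtain a b where ab: "defined a b" "in_intercalate a b r c"
    by blast
  then have "in_intercalate a b (sym_diff r (triple a b)) c"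
    unfolding in_intercalate_def triple_def by auto
  then show ?thesis
    using ab by (simp add: twist_eq)
qed (simp add: twist_eq_empty)

lemma quasigroup_twisted_mult: "quasigroup_on (Pow tags) twisted_mult"
  unfolding quasigroup_on_iff_bij_betw
proof (intro conjI ballI)
  fix a assume a: "a \<in> Pow tags"
  have "bij_betw (\<lambda>c. sym_diff c (twist a c)) (Pow tags) (Pow tags)"
    by (rule bij_betw_involution) (use twist_subset_tags twist_switch_col in blast)+
  then have "bij_betw (sym_diff a \<circ> (\<lambda>c. sym_diff c (twist a c))) (Pow tags) (Pow tags)"
    by (rule bij_betw_trans[OF _ bij_betw_sym_diff_Pow[OF PowD[OF a]]])
  moreover have "sym_diff a \<circ> (\<lambda>c. sym_diff c (twist a c)) = twisted_mult a"
    unfolding twisted_mult_def by auto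
  ultimately show "bij_betw (twisted_mult a) (Pow tags) (Pow tags)"
    by simp
  have "bij_betw (\<lambda>r. sym_diff r (twist r a)) (Pow tags) (Pow tags)"
    by (rule bij_betw_involution) (use twist_subset_tags twist_switch_row in blast)+
  then have "bij_betw (sym_diff a \<circ> (\<lambda>r. sym_diff r (twist r a))) (Pow tags) (Pow tags)"
    by (rule bij_betw_trans[OF _ bij_betw_sym_diff_Pow[OF PowD[OF a]]])
  moreover have "sym_diff a \<circ> (\<lambda>r. sym_diff r (twist r a)) = (\<lambda>r. twisted_mult r a)"
    unfolding twisted_mult_def by auto
  ultimately show "bij_betw (\<lambda>r. twisted_mult r a) (Pow tags) (Pow tags)"
    by simp
qed

lemma twisted_mult_Row_Col: "defined a b \<Longrightarrow> twisted_mult {Row a} {Col b} = {Entry (f a b)}"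
  unfolding twisted_mult_def by (auto simp: twist_eq in_intercalate_def triple_def)

lemma finite_Pow_tags: "finite C \<Longrightarrow> finite (Pow tags)"
  by (simp add: tags_def)

definition entry_mult :: "'a latin_tag set \<Rightarrow> 'a latin_tag set \<Rightarrow> 'a latin_tag set" where
  "entry_mult x y = twisted_mult (swap_row_entry ` x) (swap_col_entry ` y)"

lemma quasigroup_entry_mult: "quasigroup_on (Pow tags) entry_mult"
proof -
  have "bij_betw swap_row_entry tags tags" "bij_betw swap_col_entry tags tags"
    by (rule bij_betw_involution; auto simp: tags_def)+
  then have "bij_betw ((`) swap_row_entry) (Pow tags) (Pow tags)"
    "bij_betw ((`) swap_col_entry) (Pow tags) (Pow tags)"
    by (simp_all add: bij_betw_image_Pow)
  from quasigroup_on_isotope[OF quasigroup_twisted_mult this bij_betw_id] show ?thesis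
    by (simp add: entry_mult_def[abs_def])
qed

lemma entry_mult_Entry: "defined a b \<Longrightarrow> entry_mult {Entry a} {Entry b} = {Entry (f a b)}"
  by (simp add: entry_mult_def twisted_mult_Row_Col)

lemma partial_hom_from_entry_mult:
  assumes "finite C" and "infinite (UNIV :: 'a set)"
  obtains J :: "'a latin_tag set \<Rightarrow> 'a"
  where "inj_on J (Pow tags)" and "C \<subseteq> J ` Pow tags"
    and "\<And>x y. \<lbrakk>x \<in> Pow tags; y \<in> Pow tags; J x \<in> C; J y \<in> C; f (J x) (J y) \<in> C\<rbrakk>
           \<Longrightarrow> J (entry_mult x y) = f (J x) (J y)"
proof -
  define e :: "'a \<Rightarrow> 'a latin_tag set" where "e a = {Entry a}" for a
  have e: "inj_on e C" "e ` C \<subseteq> Pow tags"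
    by (auto simp: e_def inj_on_def tags_def)
  obtain J where J: "inj_on J (Pow tags)" and J_e: "\<And>y. y \<in> e ` C \<Longrightarrow> J y = inv_into C e y"
    using inj_on_extend_to_finite_superset[OF finite_Pow_tags[OF assms(1)] e(2)
        inj_on_inv_into[OF subset_refl] assms(2)]
    by blast
  have J_e': "J (e a) = a" if "a \<in> C" for a
    using J_e e(1) that by simp
  have e_J: "e (J x) = x" if "x \<in> Pow tags" "J x \<in> C" for x
    using e(2) that by (intro inj_onD[OF J J_e'[OF that(2)]]) auto
  have "C \<subseteq> J ` Pow tags"
  proof
    fix a assume "a \<in> C"
    then show "a \<in> J ` Pow tags"
      using J_e' e(2) by (intro image_eqI[of a J "e a"]) auto
  qed
  moreover have "J (entry_mult x y) = f (J x) (J y)"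
    if "x \<in> Pow tags" "y \<in> Pow tags" "J x \<in> C" "J y \<in> C" "f (J x) (J y) \<in> C" for x y
  proof -
    have "entry_mult x y = e (f (J x) (J y))"
      using that entry_mult_Entry[of "J x" "J y"] e_J[of x] e_J[of y]
      by (simp add: defined_def e_def)
    then show ?thesis
      using J_e' that(5) by simp
  qed
  ultimately show thesis
    using J that by blast
qed

end

lemma quasigroup_on_UNIV_partial_latin_square:
  assumes "quasigroup_on UNIV f"
  shows "partial_latin_square f C"
proof -
  have "bij (f a)" and "bij (\<lambda>x. f x b)" for a b
    using assms unfolding quasigroup_on_iff_bij_betw by blast+
  then show ?thesis
    by unfold_locales (metis bij_is_inj injD)+
qed

theorem proposition4:
  fixes f :: "'a \<Rightarrow> 'a \<Rightarrow> 'a"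
  assumes "quasigroup_on (UNIV :: 'a set) f"
  shows "approximable_by (discrete_topology UNIV) f finite_quasigroup"
  unfolding approximable_by_def
proof (intro allI impI)
  fix C :: "'a set" and \<U> :: "'a set set"
  assume "compactin (discrete_topology UNIV) C \<and> finite \<U> \<and>
    (\<forall>U\<in>\<U>. openin (discrete_topology UNIV) U) \<and> C \<subseteq> \<Union>\<U>"
  then have "finite C" and cover: "C \<subseteq> \<Union>\<U>"
    by (auto simp: compactin_discrete_topology)
  show "\<exists>H g j. finite_quasigroup H g \<and> finite H \<and> inj_on j H \<and>
          is_approximation (discrete_topology UNIV) f C \<U> H g j"
  proof (cases "finite (UNIV :: 'a set)")
    case True
    show ?thesis
      by (rule approximation_from_quasigroup_embedding[OF True assms inj_on_id _ cover]) simp_all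
  next
    case False
    interpret partial_latin_square f C
      using assms by (rule quasigroup_on_UNIV_partial_latin_square)
    obtain J where "inj_on J (Pow tags)" "C \<subseteq> J ` Pow tags"
      and "\<And>x y. \<lbrakk>x \<in> Pow tags; y \<in> Pow tags; J x \<in> C; J y \<in> C; f (J x) (J y) \<in> C\<rbrakk>
             \<Longrightarrow> J (entry_mult x y) = f (J x) (J y)"
      using partial_hom_from_entry_mult[OF \<open>finite C\<close> False] by blast
    then show ?thesis
      by (intro approximation_from_quasigroup_embedding[OF finite_Pow_tags[OF \<open>finite C\<close>]
          quasigroup_entry_mult _ _ cover])
  qed
qed

end
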